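(* For every $n\in\mathbb{N}$, \[ \mathcal{M}^{(2)}(n)=\min_{1\le s\le t\le n}\mathcal{M}^{(2)}(n,s,t)=\Bigl\lfloor\frac{n^2-10n+33}{44}\Bigr\rfloor, \] i.e. this is the minimal number of monochromatic generalized Schur triples $(x,y,x+2y)$ attainable under a $2$-coloring of $\{1,\dots,n\}$ of the form $R^sB^{t-s}R^{n-t}$.
   Context: For real $a>0$ and integers $1\le s\le t\le n$, $\mathcal{M}^{(a)}(n,s,t)$ is the number of ordered triples $T=(x,y,x+\lfloor ay\rfloor)\in\{1,\dots,n\}^3$ such that $T\in(\{1,\dots,s\}\cup\{t+1,\dots,n\})^3$ or $T\in\{s+1,\dots,t\}^3$ (i.e. monochromatic triples under the coloring $R^sB^{t-s}R^{n-t}$, which colors $1..s$ and $t+1..n$ red and $s+1..t$ blue). *)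

theory Defs
  imports Complex_Main
begin

definition red_set :: "nat \<Rightarrow> nat \<Rightarrow> nat \<Rightarrow> int set" where
  "red_set n s t = {1..int s} \<union> {int t + 1..int n}"

definition blue_set :: "nat \<Rightarrow> nat \<Rightarrow> int set" where
  "blue_set s t = {int s + 1..int t}"

definition Mcount :: "real \<Rightarrow> nat \<Rightarrow> nat \<Rightarrow> nat \<Rightarrow> nat" where
  "Mcount a n s t = card {(x :: int, y :: int, z :: int).
      x \<in> {1..int n} \<and> y \<in> {1..int n} \<and> z \<in> {1..int n} \<and>
      z = x + \<lfloor>a * real_of_int y\<rfloor> \<and>
      ((x \<in> red_set n s t \<and> y \<in> red_set n s t \<and> z \<in> red_set n s t) \<or>
       (x \<in> blue_set s t \<and> y \<in> blue_set s t \<and> z \<in> blue_set s t))}"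

end

theory Submission
  imports Defs
begin

(*
  Write a = s, b = t - 3s and c = n - t, so that n = 3a + b + c, and let P(m, Y) count the pairs
  x, y >= 1 with y <= Y and x + 2y <= m; for 0 <= m <= 2Y + 1 this is floor((m - 1)^2 / 4).
  The colouring R^s B^(t-s) R^(n-t) contains four disjoint families of monochromatic triples
  (x, y, x + 2y): those inside [1, s], those with y <= s and x in the last red block, those inside
  the blue block and those inside the last red block, counted by P(s, s), P(n - t, s),
  P(t - 3s, t - 3s) and P(n - 3t, n - 3t). In each sign regime a polynomial certificate bounds
  44 times their sum below by n^2 - 10n - 10, which gives the lower bound.
  When t >= 3s and n <= 2t + 2 the first three families are all monochromatic triples, and
  44 (P(a, a) + P(c, a) + P(b, b)) is about 11 ((a-1)^2 + (b-1)^2 + (c-1)^2) >= (n - 5)^2 by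
  Cauchy-Schwarz, with equality for a : b : c = 3 : 1 : 1. Taking s = floor(3n/11) and splitting
  n - 3s evenly between b and c, the Lagrange identity
  2 (11 (u^2 + v^2 + w^2) - (3u + v + w)^2) = (3v + 3w - 2u)^2 + 11 (v - w)^2
  bounds the rounding loss by 8.
*)

definition bounded_pairs :: "int \<Rightarrow> nat \<Rightarrow> (int \<times> int) set" where
  "bounded_pairs m Y = {(x, y). 0 < x \<and> 0 < y \<and> y \<le> int Y \<and> x + 2 * y \<le> m}"

fun pair_count :: "int \<Rightarrow> nat \<Rightarrow> int" where
  "pair_count m 0 = 0"
| "pair_count m (Suc Y) = pair_count m Y + max 0 (m - 2 * (int Y + 1))"

lemma pair_count_nonneg: "0 \<le> pair_count m Y"
  by (induction Y) auto

lemma pair_count_linear: "2 * int Y + 1 \<le> m \<Longrightarrow> pair_count m Y = int Y * (m - int Y - 1)"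
  by (induction Y) (auto simp: algebra_simps)

lemma pair_count_quadratic:
  "0 \<le> m \<Longrightarrow> m \<le> 2 * int Y + 1 \<Longrightarrow> 4 * pair_count m Y = (m - 1)\<^sup>2 - of_bool (even m)"
proof (induction Y)
  case 0
  then have "m = 0 \<or> m = 1" by auto
  then show ?case by auto
next
  case (Suc Y)
  show ?case
  proof (cases "m \<le> 2 * int Y + 1")
    case True
    with Suc show ?thesis by simp
  next
    case False
    then have lin: "pair_count m Y = int Y * (m - int Y - 1)"
      by (intro pair_count_linear) simp
    have "m = 2 * int Y + 2 \<or> m = 2 * int Y + 3" using False Suc.prems by auto
    with lin show ?thesis by (auto simp: algebra_simps power2_eq_square)
  qed
qed

lemma pair_count_lower:
  "0 \<le> m \<Longrightarrow> m \<le> 2 * int Y + 1 \<Longrightarrow> m * (m - 2) \<le> 4 * pair_count m Y"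
  using pair_count_quadratic[of m Y] by (cases "even m") (auto simp: algebra_simps power2_eq_square)

lemma finite_bounded_pairs: "finite (bounded_pairs m Y)"
  by (rule finite_subset[of _ "{1..m} \<times> {1..int Y}"]) (auto simp: bounded_pairs_def)

lemma card_bounded_pairs: "int (card (bounded_pairs m Y)) = pair_count m Y"
proof (induction Y)
  case 0
  have "bounded_pairs m 0 = {}" by (auto simp: bounded_pairs_def)
  then show ?case by simp
next
  case (Suc Y)
  have split: "bounded_pairs m (Suc Y) = bounded_pairs m Y \<union> {1..m - 2 * (int Y + 1)} \<times> {int Y + 1}"
    by (auto simp: bounded_pairs_def)
  have "card (bounded_pairs m (Suc Y))
      = card (bounded_pairs m Y) + card ({1..m - 2 * (int Y + 1)} \<times> {int Y + 1})"
    unfolding split by (intro card_Un_disjoint finite_bounded_pairs) (auto simp: bounded_pairs_def)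
  then show ?case using Suc.IH by simp
qed

definition progression_triples :: "int \<Rightarrow> int \<Rightarrow> nat \<Rightarrow> int \<Rightarrow> (int \<times> int \<times> int) set" where
  "progression_triples a b Y h =
     {(x, y, z). a < x \<and> b < y \<and> y \<le> b + int Y \<and> z = x + 2 * y \<and> z \<le> h}"

lemma progression_triples_eq_image:
  "progression_triples a b Y h
     = (\<lambda>(x, y). (x + a, y + b, x + a + 2 * (y + b))) ` bounded_pairs (h - a - 2 * b) Y"
  (is "_ = ?shift ` _")
proof (intro subset_antisym subsetI)
  fix p assume "p \<in> progression_triples a b Y h"
  then obtain x y where "p = (x, y, x + 2 * y)" "a < x" "b < y" "y \<le> b + int Y" "x + 2 * y \<le> h"
    by (auto simp: progression_triples_def)
  then show "p \<in> ?shift ` bounded_pairs (h - a - 2 * b) Y"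
    by (intro image_eqI[of _ _ "(x - a, y - b)"]) (auto simp: bounded_pairs_def)
qed (auto simp: progression_triples_def bounded_pairs_def)

lemma finite_progression_triples: "finite (progression_triples a b Y h)"
  by (simp add: progression_triples_eq_image finite_bounded_pairs)

lemma card_progression_triples:
  "int (card (progression_triples a b Y h)) = pair_count (h - a - 2 * b) Y"
  unfolding progression_triples_eq_image
  by (subst card_image) (auto simp: inj_on_def card_bounded_pairs)

definition mono_triples :: "nat \<Rightarrow> nat \<Rightarrow> nat \<Rightarrow> (int \<times> int \<times> int) set" where
  "mono_triples n s t = {(x, y, z).
      x \<in> {1..int n} \<and> y \<in> {1..int n} \<and> z \<in> {1..int n} \<and> z = x + 2 * y \<and>
      ((x \<in> red_set n s t \<and> y \<in> red_set n s t \<and> z \<in> red_set n s t) \<or>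
       (x \<in> blue_set s t \<and> y \<in> blue_set s t \<and> z \<in> blue_set s t))}"

lemma Mcount_2_eq_card_mono_triples: "Mcount 2 n s t = card (mono_triples n s t)"
proof -
  have "\<lfloor>2 * real_of_int y\<rfloor> = 2 * y" for y :: int
    by linarith
  then show ?thesis
    unfolding Mcount_def mono_triples_def by simp
qed

lemma finite_mono_triples: "finite (mono_triples n s t)"
  by (rule finite_subset[of _ "{1..int n} \<times> {1..int n} \<times> {1..int n}"])
     (auto simp: mono_triples_def)

definition family_count :: "nat \<Rightarrow> nat \<Rightarrow> nat \<Rightarrow> int" where
  "family_count n s t = pair_count (int s) s + pair_count (int n - int t) s
     + pair_count (int t - 3 * int s) (t - 3 * s) + pair_count (int n - 3 * int t) (n - 3 * t)"

lemma family_count_le_card_mono_triples: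
  assumes "s \<le> t" "t \<le> n"
  shows "family_count n s t \<le> int (card (mono_triples n s t))"
proof -
  define head where "head = progression_triples 0 0 s (int s)"
  define cross where "cross = progression_triples (int t) 0 s (int n)"
  \<comment> \<open>If t < 3s or n < 3t, the truncated bound t - 3s or n - 3t empties blue or tail, which only
    weakens the bound.\<close>
  define blue where "blue = progression_triples (int s) (int s) (t - 3 * s) (int t)"
  define tail where "tail = progression_triples (int t) (int t) (n - 3 * t) (int n)"
  note defs = head_def cross_def blue_def tail_def
  have "head \<inter> cross = {}" "(head \<union> cross) \<inter> blue = {}" "(head \<union> cross \<union> blue) \<inter> tail = {}"
    using assms unfolding defs progression_triples_def by fastforce+
  then have "int (card head) + int (card cross) + int (card blue) + int (card tail)
             = int (card (head \<union> cross \<union> blue \<union> tail))"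
    by (simp add: card_Un_disjoint defs finite_progression_triples)
  also have "\<dots> \<le> int (card (mono_triples n s t))"
  proof -
    have "head \<union> cross \<union> blue \<union> tail \<subseteq> mono_triples n s t"
      using assms by (auto simp: defs progression_triples_def mono_triples_def red_set_def blue_set_def)
    then show ?thesis
      by (intro of_nat_mono card_mono finite_mono_triples)
  qed
  finally show ?thesis
    by (simp add: family_count_def defs card_progression_triples)
qed

lemma card_mono_triples_le_family_count:
  assumes "1 \<le> s" "3 * s \<le> t" "t \<le> n" "n \<le> 2 * t + 2"
  shows "int (card (mono_triples n s t)) \<le> family_count n s t"
proof -
  define head where "head = progression_triples 0 0 s (int s)"
  define cross where "cross = progression_triples (int t) 0 s (int n)"
  define blue where "blue = progression_triples (int s) (int s) (t - 3 * s) (int t)"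
  note defs = head_def cross_def blue_def
  \<comment> \<open>A red y exceeding t would give z > n, and a red x \<le> s gives z \<le> 3s \<le> t, so z cannot
    jump over the blue block.\<close>
  have "mono_triples n s t \<subseteq> head \<union> cross \<union> blue"
    using assms by (auto simp: defs progression_triples_def mono_triples_def red_set_def blue_set_def)
  then have "int (card (mono_triples n s t)) \<le> int (card (head \<union> cross \<union> blue))"
    by (intro of_nat_mono card_mono) (simp_all add: defs finite_progression_triples)
  also have "\<dots> \<le> int (card head) + int (card cross) + int (card blue)"
    using card_Un_le[of "head \<union> cross" blue] card_Un_le[of head cross] by linarith
  also have "\<dots> = family_count n s t"
    \<comment> \<open>the tail term vanishes, as n \<le> 2t + 2 < 3t\<close>
    using assms by (simp add: family_count_def defs card_progression_triples)
  finally show ?thesis .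
qed

(*
  Certificates for the lower bound, one per regime: the cross family (y <= s, x > t) counts
  quadratically when n - t <= 2s + 1 and linearly otherwise, and the blue and tail families
  contribute only when t >= 3s, resp. n >= 3t.
*)

lemma lower_poly_cross_quadratic_blue:
  fixes s t n :: int
  shows "n\<^sup>2 - 10 * n - 8 \<le> 11 * (s * (s - 2) + (n - t) * (n - t - 2) + (t - 3 * s) * (t - 3 * s - 2))"
proof -
  define u v w where "u = s - 1" and "v = t - 3 * s - 1" and "w = n - t - 1"
  have "11 * (s * (s - 2) + (n - t) * (n - t - 2) + (t - 3 * s) * (t - 3 * s - 2)) - (n\<^sup>2 - 10 * n - 8)
      = (3 * v - u)\<^sup>2 + (3 * w - u)\<^sup>2 + (v - w)\<^sup>2"
    by (simp add: u_def v_def w_def power2_eq_square algebra_simps)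
  moreover have "0 \<le> (3 * v - u)\<^sup>2 + (3 * w - u)\<^sup>2 + (v - w)\<^sup>2"
    by simp
  ultimately show ?thesis
    by linarith
qed

lemma lower_poly_cross_quadratic:
  fixes s t n :: int
  assumes "t < 3 * s" "3 \<le> n"
  shows "n\<^sup>2 - 10 * n - 10 \<le> 11 * (s * (s - 2) + (n - t) * (n - t - 2))"
proof -
  have "n - 3 \<le> 3 * s + (n - t) - 4"
    using assms by linarith
  then have "(n - 3) * (n - 3) \<le> (3 * s + (n - t) - 4) * (3 * s + (n - t) - 4)"
    using assms by (intro mult_mono) auto
  moreover have "0 \<le> n * n + 34 * n - 21"
    using assms by (smt (verit) mult_nonneg_nonneg)
  moreover have "10 * (11 * (s * (s - 2) + (n - t) * (n - t - 2))) - 10 * (n\<^sup>2 - 10 * n - 10)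
      = 11 * ((3 * s + (n - t) - 4) * (3 * s + (n - t) - 4) - (n - 3) * (n - 3))
        + 11 * ((s - 1) - 3 * (n - t - 1))\<^sup>2 + (n * n + 34 * n - 21)"
    by (simp add: algebra_simps power2_eq_square)
  moreover have "0 \<le> ((s - 1) - 3 * (n - t - 1))\<^sup>2"
    by simp
  ultimately show ?thesis
    by (smt (verit))
qed

lemma lower_poly_cross_linear_blue_tail:
  fixes s t n :: int
  assumes "1 \<le> s" "3 * s \<le> t" "3 * t \<le> n"
  shows "n\<^sup>2 - 10 * n - 10
    \<le> 11 * (s * (s - 2) + 4 * s * (n - t - s - 1) + (t - 3 * s) * (t - 3 * s - 2) + (n - 3 * t) * (n - 3 * t - 2))"
proof -
  define p q where "p = t - 3 * s" and "q = n - 3 * t"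
  have "2 * (11 * (s * (s - 2) + 4 * s * (n - t - s - 1) + (t - 3 * s) * (t - 3 * s - 2)
                   + (n - 3 * t) * (n - 3 * t - 2)) - (n\<^sup>2 - 10 * n - 10))
      = (2 * p - 3 * q)\<^sup>2 + 11 * q * q + 300 * s * s + 68 * s * p + 52 * (s - 1) * q
        + 28 * q + 48 * s + 16 * p + 20"
    by (simp add: p_def q_def algebra_simps power2_eq_square)
  moreover have "0 \<le> (2 * p - 3 * q)\<^sup>2 + 11 * q * q + 300 * s * s + 68 * s * p + 52 * (s - 1) * q
        + 28 * q + 48 * s + 16 * p + 20"
    using assms by (intro add_nonneg_nonneg mult_nonneg_nonneg) (auto simp: p_def q_def)
  ultimately show ?thesis
    by (smt (verit))
qed

lemma lower_poly_cross_linear_tail: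
  fixes s t n :: int
  assumes "1 \<le> s" "s \<le> t" "t < 3 * s" "3 * t \<le> n"
  shows "n\<^sup>2 - 10 * n - 10 \<le> 11 * (s * (s - 2) + 4 * s * (n - t - s - 1) + (n - 3 * t) * (n - 3 * t - 2))"
proof -
  define b q where "b = t - s" and "q = n - 3 * t"
  have "11 * (s * (s - 2) + 4 * s * (n - t - s - 1) + (n - 3 * t) * (n - 3 * t - 2)) - (n\<^sup>2 - 10 * n - 10)
      = 9 * b * (2 * s - b) + 6 * q * (2 * s - b) + 46 * s * (s - 1) + 10 * s + 52 * s * b + 30 * b
        + 26 * (s - 1) * q + 14 * q + 10 * q * q + 10"
    by (simp add: b_def q_def algebra_simps power2_eq_square)
  moreover have "0 \<le> 9 * b * (2 * s - b) + 6 * q * (2 * s - b) + 46 * s * (s - 1) + 10 * s + 52 * s * b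
        + 30 * b + 26 * (s - 1) * q + 14 * q + 10 * q * q + 10"
    using assms by (intro add_nonneg_nonneg mult_nonneg_nonneg) (auto simp: b_def q_def)
  ultimately show ?thesis
    by linarith
qed

lemma lower_poly_cross_linear_blue:
  fixes s t n :: int
  assumes "1 \<le> s" "2 * s + 2 \<le> n - t" "3 * s \<le> t" "n < 3 * t"
  shows "n\<^sup>2 - 10 * n - 10 \<le> 11 * (s * (s - 2) + 4 * s * (n - t - s - 1) + (t - 3 * s) * (t - 3 * s - 2))"
proof -
  define p g d where "p = t - 3 * s" and "g = n - t - 2 * s - 2" and "d = 4 * s + 2 * p - 3 - g"
  have "0 \<le> g" "0 \<le> d" "0 \<le> p"
    using assms by (auto simp: g_def d_def p_def)
  let ?diff = "11 * (s * (s - 2) + 4 * s * (n - t - s - 1) + (t - 3 * s) * (t - 3 * s - 2)) - (n\<^sup>2 - 10 * n - 10)"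
  show ?thesis
  proof (cases "0 \<le> 30 * s - 4 * p + 9")
    case True
    define k where "k = 30 * s - 4 * p + 9"
    have "?diff = g * d + (5 * (s - p)\<^sup>2 + 25 * s * s + 5 * (p - 2)\<^sup>2 + 52 * s + 4 * p + 6) + g * k"
      by (simp add: k_def p_def g_def d_def algebra_simps power2_eq_square)
    moreover have "0 \<le> g * d + (5 * (s - p)\<^sup>2 + 25 * s * s + 5 * (p - 2)\<^sup>2 + 52 * s + 4 * p + 6) + g * k"
      using assms True \<open>0 \<le> g\<close> \<open>0 \<le> d\<close> \<open>0 \<le> p\<close>
      by (intro add_nonneg_nonneg mult_nonneg_nonneg) (auto simp: k_def)
    ultimately show ?thesis
      by linarith
  next
    case False
    define k where "k = 4 * p - 30 * s - 9"
    have "?diff = g * d + (150 * s * (s - 1) + 34 * s * p + 2 * p * p + (148 * s - 1) + 14 * p) + d * k"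
      by (simp add: k_def p_def g_def d_def algebra_simps power2_eq_square)
    moreover have "0 \<le> g * d + (150 * s * (s - 1) + 34 * s * p + 2 * p * p + (148 * s - 1) + 14 * p) + d * k"
      using assms False \<open>0 \<le> g\<close> \<open>0 \<le> d\<close> \<open>0 \<le> p\<close>
      by (intro add_nonneg_nonneg mult_nonneg_nonneg) (auto simp: k_def)
    ultimately show ?thesis
      by linarith
  qed
qed

lemma lower_poly_cross_linear:
  fixes s t n :: int
  assumes "1 \<le> s" "2 * s + 2 \<le> n - t" "t < 3 * s" "n < 3 * t"
  shows "n\<^sup>2 - 10 * n - 10 \<le> 11 * (s * (s - 2) + 4 * s * (n - t - s - 1))"
proof -
  define x y z where "x = 3 * s - t - 1" and "y = n - t - 2 * s - 2" and "z = 3 * t - n - 1"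
  have "0 \<le> x" "0 \<le> y" "0 \<le> z"
    using assms by (auto simp: x_def y_def z_def)
  have "2 * (11 * (s * (s - 2) + 4 * s * (n - t - s - 1)) - (n\<^sup>2 - 10 * n - 10))
      = 2 * y * z + x * z + 9 * x * y + 60 * s * s + 124 * s + 38 + 60 * s * y + 26 * y
        + 16 * (s - 1) * x + 5 * x"
    by (simp add: x_def y_def z_def algebra_simps power2_eq_square)
  moreover have "0 \<le> 2 * y * z + x * z + 9 * x * y + 60 * s * s + 124 * s + 38 + 60 * s * y + 26 * y
        + 16 * (s - 1) * x + 5 * x"
    using assms \<open>0 \<le> x\<close> \<open>0 \<le> y\<close> \<open>0 \<le> z\<close>
    by (intro add_nonneg_nonneg mult_nonneg_nonneg) auto
  ultimately show ?thesis
    by (smt (verit))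
qed

lemma lower_bound_from_family_bounds:
  fixes s t n A B E D :: int
  assumes st: "1 \<le> s" "s \<le> t" "3 \<le> n"
    and A: "s * (s - 2) \<le> 4 * A"
    and B_quadratic: "n - t \<le> 2 * s + 1 \<Longrightarrow> (n - t) * (n - t - 2) \<le> 4 * B"
    and B_linear: "2 * s + 1 < n - t \<Longrightarrow> 4 * B = 4 * s * (n - t - s - 1)"
    and E: "0 \<le> E" "0 \<le> t - 3 * s \<Longrightarrow> (t - 3 * s) * (t - 3 * s - 2) \<le> 4 * E"
    and D: "0 \<le> D" "0 \<le> n - 3 * t \<Longrightarrow> (n - 3 * t) * (n - 3 * t - 2) \<le> 4 * D"
  shows "n\<^sup>2 - 10 * n - 10 \<le> 44 * (A + B + E + D)"
proof (cases "n - t \<le> 2 * s + 1")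
  case True
  note B = B_quadratic[OF True]
  show ?thesis
  proof (cases "0 \<le> t - 3 * s")
    case True
    then show ?thesis
      using lower_poly_cross_quadratic_blue[where s = s and t = t and n = n] A B E(2) D(1) by (smt (verit))
  next
    case False
    then show ?thesis
      using lower_poly_cross_quadratic[where s = s and t = t and n = n] st(3) A B E(1) D(1) by (smt (verit))
  qed
next
  case False
  then have cross: "2 * s + 2 \<le> n - t"
    by simp
  have B: "4 * B = 4 * s * (n - t - s - 1)"
    using B_linear False by simp
  consider (blue_tail) "0 \<le> t - 3 * s" "0 \<le> n - 3 * t" | (tail) "t < 3 * s" "0 \<le> n - 3 * t"
    | (blue) "0 \<le> t - 3 * s" "n < 3 * t" | (neither) "t < 3 * s" "n < 3 * t"
    by linarith
  then show ?thesis
  proof cases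
    case blue_tail
    then show ?thesis
      using lower_poly_cross_linear_blue_tail[OF st(1)] A B E(2) D(2) by (smt (verit))
  next
    case tail
    then show ?thesis
      using lower_poly_cross_linear_tail[OF st(1,2)] A B E(1) D(2) by (smt (verit))
  next
    case blue
    then show ?thesis
      using lower_poly_cross_linear_blue[OF st(1) cross] A B E(2) D(1) by (smt (verit))
  next
    case neither
    then show ?thesis
      using lower_poly_cross_linear[OF st(1) cross] A B E(1) D(1) by (smt (verit))
  qed
qed

lemma family_count_lower_bound:
  assumes "1 \<le> s" "s \<le> t" "t \<le> n" "3 \<le> n"
  shows "(int n)\<^sup>2 - 10 * int n - 10 \<le> 44 * family_count n s t"
  unfolding family_count_def
proof (rule lower_bound_from_family_bounds)
  show "1 \<le> int s" "int s \<le> int t" "3 \<le> int n"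
    using assms by simp_all
  show "int s * (int s - 2) \<le> 4 * pair_count (int s) s"
    by (rule pair_count_lower) auto
  show "(int n - int t) * (int n - int t - 2) \<le> 4 * pair_count (int n - int t) s"
    if "int n - int t \<le> 2 * int s + 1"
    using that assms by (intro pair_count_lower) auto
  show "4 * pair_count (int n - int t) s = 4 * int s * (int n - int t - int s - 1)"
    if "2 * int s + 1 < int n - int t"
    using that by (subst pair_count_linear) auto
  show "(int t - 3 * int s) * (int t - 3 * int s - 2) \<le> 4 * pair_count (int t - 3 * int s) (t - 3 * s)"
    if "0 \<le> int t - 3 * int s"
    using that by (intro pair_count_lower) auto
  show "(int n - 3 * int t) * (int n - 3 * int t - 2) \<le> 4 * pair_count (int n - 3 * int t) (n - 3 * t)"
    if "0 \<le> int n - 3 * int t"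
    using that by (intro pair_count_lower) auto
qed (rule pair_count_nonneg)+

lemma card_mono_triples_lower_bound:
  assumes "1 \<le> s" "s \<le> t" "t \<le> n"
  shows "(int n)\<^sup>2 - 10 * int n + 33 < 44 * int (card (mono_triples n s t)) + 44"
proof (cases "3 \<le> n")
  case True
  with assms show ?thesis
    using family_count_lower_bound family_count_le_card_mono_triples by (smt (verit))
next
  case False
  then have "int n * int n \<le> 10 * int n"
    by (intro mult_right_mono) auto
  then show ?thesis
    by (simp add: power2_eq_square)
qed

lemma rounded_square_sum_bound:
  fixes a b c :: int
  assumes "c \<le> b" "b \<le> c + 1" "0 \<le> 3 * b + 3 * c - 2 * a" "3 * b + 3 * c - 2 * a \<le> 10"
  shows "11 * (((a - 1)\<^sup>2 - of_bool (even a)) + ((b - 1)\<^sup>2 - of_bool (even b))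
                + ((c - 1)\<^sup>2 - of_bool (even c)))
         \<le> (3 * a + b + c - 5)\<^sup>2 + 8"
proof -
  define e where "e = 3 * b + 3 * c - 2 * a - 4"
  define evens :: int where "evens = of_bool (even a) + of_bool (even b) + of_bool (even c)"
  have lagrange: "2 * (11 * ((a - 1)\<^sup>2 + (b - 1)\<^sup>2 + (c - 1)\<^sup>2) - (3 * a + b + c - 5)\<^sup>2)
                    = e\<^sup>2 + 11 * (b - c)\<^sup>2"
    by (simp add: e_def algebra_simps power2_eq_square)
  have "e\<^sup>2 + 11 * (b - c)\<^sup>2 \<le> 16 + 22 * evens"
  proof (cases "b - c = 1")
    case True
    then have "even b \<or> even c"
      by presburger
    then have "1 \<le> evens"
      by (auto simp: evens_def)
    from True assms have "e = -3 \<or> e = -1 \<or> e = 1 \<or> e = 3 \<or> e = 5"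
      unfolding e_def by presburger
    with True \<open>1 \<le> evens\<close> show ?thesis
      by auto
  next
    case False
    with assms have "b = c"
      by auto
    with assms have "e = -4 \<or> e = -2 \<or> e = 0 \<or> e = 2 \<or> e = 4 \<or> (e = 6 \<and> (even a \<or> even b))"
      unfolding e_def by presburger
    with \<open>b = c\<close> show ?thesis
      by (auto simp: evens_def)
  qed
  with lagrange show ?thesis
    by (simp add: evens_def algebra_simps)
qed

lemma card_mono_triples_near_optimal:
  assumes "1 \<le> s" "t \<le> n" "11 * s \<le> 3 * n" "3 * n \<le> 11 * s + 10"
    and "n + 3 * s \<le> 2 * t" "2 * t \<le> n + 3 * s + 1"
  shows "44 * int (card (mono_triples n s t)) \<le> (int n)\<^sup>2 - 10 * int n + 33"
proof -
  have st: "3 * s \<le> t" "n \<le> 2 * t + 2" "n - t \<le> 2 * s + 1" "n \<le> 3 * t"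
    using assms by linarith+
  have "4 * pair_count (int s) s = (int s - 1)\<^sup>2 - of_bool (even (int s))"
    by (rule pair_count_quadratic) auto
  moreover have "4 * pair_count (int n - int t) s = (int n - int t - 1)\<^sup>2 - of_bool (even (int n - int t))"
    using assms st by (intro pair_count_quadratic) auto
  moreover have "4 * pair_count (int t - 3 * int s) (t - 3 * s)
                 = (int t - 3 * int s - 1)\<^sup>2 - of_bool (even (int t - 3 * int s))"
    using st by (intro pair_count_quadratic) auto
  moreover have "11 * (((int s - 1)\<^sup>2 - of_bool (even (int s)))
                       + ((int t - 3 * int s - 1)\<^sup>2 - of_bool (even (int t - 3 * int s)))
                       + ((int n - int t - 1)\<^sup>2 - of_bool (even (int n - int t))))
                 \<le> (3 * int s + (int t - 3 * int s) + (int n - int t) - 5)\<^sup>2 + 8"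
    by (rule rounded_square_sum_bound) (use assms in auto)
  moreover have "(int n)\<^sup>2 - 10 * int n + 33 = (3 * int s + (int t - 3 * int s) + (int n - int t) - 5)\<^sup>2 + 8"
    by (simp add: algebra_simps power2_eq_square)
  moreover have "pair_count (int n - 3 * int t) (n - 3 * t) = 0"
    using st(4) by simp
  ultimately show ?thesis
    using card_mono_triples_le_family_count[OF assms(1) st(1) assms(2) st(2)]
    unfolding family_count_def by (smt (verit))
qed

lemma exists_coloring_with_few_mono_triples:
  assumes "1 \<le> n"
  shows "\<exists>s t. 1 \<le> s \<and> s \<le> t \<and> t \<le> n
           \<and> 44 * int (card (mono_triples n s t)) \<le> (int n)\<^sup>2 - 10 * int n + 33"
proof (cases "n \<le> 5")
  case True
  then have "mono_triples n 1 n = {}"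
    by (auto simp: mono_triples_def red_set_def blue_set_def)
  moreover have "0 \<le> (int n)\<^sup>2 - 10 * int n + 33"
    using zero_le_power2[of "int n - 5"] by (simp add: algebra_simps power2_eq_square)
  ultimately have "44 * int (card (mono_triples n 1 n)) \<le> (int n)\<^sup>2 - 10 * int n + 33"
    by simp
  with assms show ?thesis
    by blast
next
  case False
  define s where "s = 3 * n div 11"
  define t where "t = n - (n - 3 * s) div 2"
  have "11 * s \<le> 3 * n" "3 * n \<le> 11 * s + 10"
    unfolding s_def by auto
  moreover have "n + 3 * s \<le> 2 * t" "2 * t \<le> n + 3 * s + 1" "t \<le> n"
    using \<open>11 * s \<le> 3 * n\<close> unfolding t_def by auto
  moreover have "1 \<le> s" "s \<le> t"
    using False calculation by linarith+
  ultimately show ?thesis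
    using card_mono_triples_near_optimal by blast
qed

lemma Min_Mcount_2_bounds:
  assumes "1 \<le> n"
  defines "m \<equiv> int (Min {Mcount 2 n s t | s t. 1 \<le> s \<and> s \<le> t \<and> t \<le> n})"
  shows "44 * m \<le> (int n)\<^sup>2 - 10 * int n + 33" "(int n)\<^sup>2 - 10 * int n + 33 < 44 * m + 44"
proof -
  let ?counts = "{Mcount 2 n s t | s t. 1 \<le> s \<and> s \<le> t \<and> t \<le> n}"
  obtain s0 t0 where st0: "1 \<le> s0" "s0 \<le> t0" "t0 \<le> n"
    and few: "44 * int (card (mono_triples n s0 t0)) \<le> (int n)\<^sup>2 - 10 * int n + 33"
    using exists_coloring_with_few_mono_triples[OF assms(1)] by blast
  have "finite ?counts"
    by (rule finite_subset[of _ "(\<lambda>(s, t). Mcount 2 n s t) ` ({..n} \<times> {..n})"]) auto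
  then have "Min ?counts = card (mono_triples n s0 t0)"
  proof (rule Min_eqI)
    show "card (mono_triples n s0 t0) \<le> k" if "k \<in> ?counts" for k
    proof -
      from that obtain s t where "k = card (mono_triples n s t)" "1 \<le> s" "s \<le> t" "t \<le> n"
        by (auto simp: Mcount_2_eq_card_mono_triples)
      with few card_mono_triples_lower_bound[of s t n] show ?thesis
        by linarith
    qed
    show "card (mono_triples n s0 t0) \<in> ?counts"
      using st0 by (auto simp: Mcount_2_eq_card_mono_triples)
  qed
  then show "44 * m \<le> (int n)\<^sup>2 - 10 * int n + 33" "(int n)\<^sup>2 - 10 * int n + 33 < 44 * m + 44"
    using few card_mono_triples_lower_bound[OF st0] by (simp_all add: m_def)
qed

theorem theorem4p2:
  fixes n :: nat
  assumes "n \<ge> 1"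
  shows "int (Min {Mcount 2 n s t | s t. 1 \<le> s \<and> s \<le> t \<and> t \<le> n})
           = \<lfloor>(real n ^ 2 - 10 * real n + 33) / 44\<rfloor>"
proof (rule sym, rule floor_unique)
  let ?m = "int (Min {Mcount 2 n s t | s t. 1 \<le> s \<and> s \<le> t \<and> t \<le> n})"
  have "real_of_int (44 * ?m) \<le> real_of_int ((int n)\<^sup>2 - 10 * int n + 33)"
    using Min_Mcount_2_bounds(1)[OF assms] by (simp only: of_int_le_iff)
  then show "real_of_int ?m \<le> (real n ^ 2 - 10 * real n + 33) / 44"
    by simp
  have "real_of_int ((int n)\<^sup>2 - 10 * int n + 33) < real_of_int (44 * ?m + 44)"
    using Min_Mcount_2_bounds(2)[OF assms] by (simp only: of_int_less_iff)
  then show "(real n ^ 2 - 10 * real n + 33) / 44 < real_of_int ?m + 1"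
    by simp
qed

end
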